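(* Let $\mathcal{X}\subseteq\mathbb{R}^n$ be a nonempty closed convex set with Euclidean projection $\Pi_{\mathcal{X}}$, let $\Theta\subseteq\mathbb{R}^m$, and let $f:\mathbb{R}^n\times\mathbb{R}^m\to\mathbb{R}$ be differentiable and convex in its first argument. Assume: (A1) there is $G>0$ with $|f(x,\theta)-f(y,\theta)|\le G\|x-y\|$ for all $x,y\in\mathcal{X}$, $\theta\in\Theta$; (A2) there is $L>0$ with $f(y,\theta)\le f(x,\theta)+\nabla_x f(x,\theta)^T(y-x)+\frac{L}{2}\|y-x\|^2$ for all $x,y\in\mathcal{X}$, $\theta\in\Theta$; (A3) there is $\lambda>0$ with $f(y,\theta)\ge f(x,\theta)+\nabla_x f(x,\theta)^T(y-x)+\frac{\lambda}{2}\|y-x\|^2$ for all $x,y\in\mathcal{X}$, $\theta\in\Theta$; (A4) there is $C_\theta>0$ with $\|\nabla_x f(x,\theta_1)-\nabla_x f(x,\theta_2)\|\le C_\theta\|\theta_1-\theta_2\|$ for all $x\in\mathcal{X}$, $\theta_1,\theta_2\in\Theta$. Let $\theta_1,\dots,\theta_T\in\Theta$ be a sequence of parameters and, for $t=2,\dots,T$, let $\hat\theta_t\in\Theta$ be a prediction of $\theta_t$ made from $\theta_1,\dots,\theta_{t-1}$. Let $\eta>0$, $x_1\in\mathcal{X}$, and define (online predictive gradient descent) $x_{t+1}=\Pi_{\mathcal{X}}\big(x_t-\eta\nabla_x f(x_t,\hat\theta_{t+1})\big)$ for $t=1,\dots,T-1$. If $\eta\le 1/L$, then with $C_{\eta,\lambda}=\sqrt{1-\frac{2\lambda\eta}{1+\eta\lambda}}<1$,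 $$\mathbf{Reg}_D(\{x_t\})\le \frac{G\|x_1-x_1^\ast\|}{1-C_{\eta,\lambda}}+\frac{G\,C_{\eta,\lambda}}{1-C_{\eta,\lambda}}\mathcal{P}^\ast+\frac{G\eta C_\theta}{1-C_{\eta,\lambda}}P^\theta .$$
   Context: Write $f_t(x)=f(x,\theta_t)$ and $x_t^\ast=\arg\min_{x\in\mathcal{X}}f(x,\theta_t)$. The dynamic regret is $\mathbf{Reg}_D(\{x_t\})=\sum_{t=1}^T\big(f(x_t,\theta_t)-\min_{x\in\mathcal{X}}f(x,\theta_t)\big)$. The path length is $\mathcal{P}^\ast=\sum_{t=1}^{T-1}\|x_t^\ast-x_{t+1}^\ast\|$, and the parameter prediction regularity is $P^\theta=\sum_{t=2}^T\|\theta_t-\hat\theta_t\|$. All norms are Euclidean. *)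

theory Defs
  imports "HOL-Analysis.Analysis"
begin

text \<open>Minimizer of g over X (x^* = argmin_{x in X} g x); unique under strong convexity.\<close>
definition argmin_on :: "'a set \<Rightarrow> ('a \<Rightarrow> real) \<Rightarrow> 'a" where
  "argmin_on X g = (SOME x. x \<in> X \<and> (\<forall>y\<in>X. g x \<le> g y))"

definition dyn_regret ::
  "'a set \<Rightarrow> ('a \<Rightarrow> 'b \<Rightarrow> real) \<Rightarrow> (nat \<Rightarrow> 'b) \<Rightarrow> (nat \<Rightarrow> 'a) \<Rightarrow> nat \<Rightarrow> real" where
  "dyn_regret X f \<theta> x T = (\<Sum>t=1..T. f (x t) (\<theta> t) - Inf ((\<lambda>y. f y (\<theta> t)) ` X))"

definition path_length ::
  "('a::real_normed_vector) set \<Rightarrow> ('a \<Rightarrow> 'b \<Rightarrow> real) \<Rightarrow> (nat \<Rightarrow> 'b) \<Rightarrow> nat \<Rightarrow> real" where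
  "path_length X f \<theta> T =
     (\<Sum>t\<in>{1..<T}. norm (argmin_on X (\<lambda>y. f y (\<theta> t)) - argmin_on X (\<lambda>y. f y (\<theta> (Suc t)))))"

definition pred_regularity ::
  "(nat \<Rightarrow> 'b::real_normed_vector) \<Rightarrow> (nat \<Rightarrow> 'b) \<Rightarrow> nat \<Rightarrow> real" where
  "pred_regularity \<theta> \<theta>h T = (\<Sum>t=2..T. norm (\<theta> t - \<theta>h t))"

end

theory Submission
  imports Defs
begin

text \<open>
  The minimizer z of f(-, theta_(t+1)) on X satisfies first-order optimality; together with the
  projection inequality, smoothness and strong convexity this makes a projected gradient step with
  the true gradient a contraction towards z with factor C = sqrt((1 - eta lam) / (1 + eta lam)).
  The projection is nonexpansive, so stepping with the predicted parameter costs at most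
  eta C_theta times the prediction error. Passing through the previous minimizer by the triangle
  inequality, the tracking errors e_t = |x_t - x*_t| satisfy
  e_(t+1) <= C (e_t + |x*_t - x*_(t+1)|) + eta C_theta |theta_(t+1) - hat theta_(t+1)|;
  summing, absorbing C * sum e_t and using the Lipschitz bound of the losses gives the regret bound.
\<close>

lemma smooth_min_on_convex_inner_nonneg:
  fixes \<phi> :: "'a::real_inner \<Rightarrow> real"
  assumes "convex X" and z: "z \<in> X" and v: "v \<in> X" and zmin: "\<forall>w\<in>X. \<phi> z \<le> \<phi> w"
    and "L > 0"
    and smooth: "\<And>w. w \<in> X \<Longrightarrow> \<phi> w \<le> \<phi> z + g \<bullet> (w - z) + L / 2 * (norm (w - z))\<^sup>2"
  shows "g \<bullet> (v - z) \<ge> 0"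
proof (rule ccontr)
  define d where "d = v - z"
  assume "\<not> g \<bullet> (v - z) \<ge> 0"
  hence a: "g \<bullet> d < 0" by (simp add: d_def)
  hence "d \<noteq> 0" by auto
  hence nd: "(norm d)\<^sup>2 > 0" by simp
  \<comment> \<open>a short step from z towards v decreases \<phi>, since the linear term dominates the quadratic one\<close>
  define s where "s = min 1 (- (g \<bullet> d) / (L * (norm d)\<^sup>2))"
  have s0: "s > 0" using a nd \<open>L > 0\<close> by (simp add: s_def divide_neg_pos)
  have sle: "L * s * (norm d)\<^sup>2 \<le> - (g \<bullet> d)"
    using nd \<open>L > 0\<close> unfolding s_def by (simp add: min_def field_simps)
  have "z + s *\<^sub>R d = (1 - s) *\<^sub>R z + s *\<^sub>R v" by (simp add: d_def algebra_simps)
  hence w: "z + s *\<^sub>R d \<in> X"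
    using \<open>convex X\<close> z v s0 by (simp add: convex_def s_def)
  have "\<phi> z \<le> \<phi> (z + s *\<^sub>R d)" using zmin w by blast
  also have "\<dots> \<le> \<phi> z + s * (g \<bullet> d) + L / 2 * s\<^sup>2 * (norm d)\<^sup>2"
    using smooth[OF w] s0 by (simp add: power_mult_distrib)
  finally have "0 \<le> s * (g \<bullet> d + L / 2 * s * (norm d)\<^sup>2)"
    by (simp add: power2_eq_square algebra_simps)
  hence "0 \<le> g \<bullet> d + L / 2 * s * (norm d)\<^sup>2" using s0 by (simp add: zero_le_mult_iff)
  thus False using sle a by linarith
qed

lemma projected_gradient_step_contracts:
  fixes \<phi> :: "'a::euclidean_space \<Rightarrow> real" and g :: "'a \<Rightarrow> 'a"
  assumes "convex X" "closed X" and x: "x \<in> X" and z: "z \<in> X" and zmin: "\<forall>w\<in>X. \<phi> z \<le> \<phi> w"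
    and smooth: "\<And>u v. u \<in> X \<Longrightarrow> v \<in> X \<Longrightarrow>
                   \<phi> v \<le> \<phi> u + g u \<bullet> (v - u) + L / 2 * (norm (v - u))\<^sup>2"
    and strong: "\<And>u v. u \<in> X \<Longrightarrow> v \<in> X \<Longrightarrow>
                   \<phi> v \<ge> \<phi> u + g u \<bullet> (v - u) + lam / 2 * (norm (v - u))\<^sup>2"
    and "L > 0" "lam > 0" "\<eta> > 0" "\<eta> * L \<le> 1"
  shows "norm (closest_point X (x - \<eta> *\<^sub>R g x) - z)
           \<le> sqrt (1 - 2 * lam * \<eta> / (1 + \<eta> * lam)) * norm (x - z)"
proof -
  define y where "y = closest_point X (x - \<eta> *\<^sub>R g x)"
  define a where "a = x - y"
  define b where "b = y - z"
  have y: "y \<in> X" using closest_point_in_set[OF \<open>closed X\<close>] x by (auto simp: y_def)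
  have "g z \<bullet> (y - z) \<ge> 0"
    using smooth_min_on_convex_inner_nonneg[OF \<open>convex X\<close> z y zmin \<open>L > 0\<close> smooth[OF z]] .
  hence grow_y: "\<phi> y \<ge> \<phi> z + lam / 2 * (norm b)\<^sup>2" using strong[OF z y] by (simp add: b_def)
  have "(x - \<eta> *\<^sub>R g x - y) \<bullet> (z - y) \<le> 0"
    using closest_point_dot[OF \<open>convex X\<close> \<open>closed X\<close> z] by (simp add: y_def)
  hence proj: "\<eta> * (g x \<bullet> b) \<le> a \<bullet> b"
    by (simp add: a_def b_def inner_diff_left inner_diff_right algebra_simps)
  have "L * (norm a)\<^sup>2 \<le> 1 / \<eta> * (norm a)\<^sup>2"
    using \<open>\<eta> > 0\<close> \<open>\<eta> * L \<le> 1\<close> by (intro mult_right_mono) (simp_all add: field_simps)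
  hence "\<phi> y \<le> \<phi> x + g x \<bullet> (y - x) + 1 / (2 * \<eta>) * (norm a)\<^sup>2"
    using smooth[OF x y] by (simp add: a_def norm_minus_commute)
  moreover have "\<phi> z \<ge> \<phi> x + g x \<bullet> (z - x) + lam / 2 * (norm (a + b))\<^sup>2"
    using strong[OF x z] by (simp add: a_def b_def norm_minus_commute)
  moreover have "g x \<bullet> (y - x) - g x \<bullet> (z - x) = g x \<bullet> b" by (simp add: b_def inner_diff_right)
  ultimately have "lam / 2 * (norm b)\<^sup>2 \<le> g x \<bullet> b + 1 / (2 * \<eta>) * (norm a)\<^sup>2 - lam / 2 * (norm (a + b))\<^sup>2"
    using grow_y by linarith
  hence "\<eta> * lam * (norm b)\<^sup>2 \<le> 2 * (\<eta> * (g x \<bullet> b)) + (norm a)\<^sup>2 - \<eta> * lam * (norm (a + b))\<^sup>2"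
    using \<open>\<eta> > 0\<close> by (simp add: field_simps)
  also have "\<dots> \<le> 2 * (a \<bullet> b) + (norm a)\<^sup>2 - \<eta> * lam * (norm (a + b))\<^sup>2" using proj by simp
  also have "\<dots> = (norm (a + b))\<^sup>2 - (norm b)\<^sup>2 - \<eta> * lam * (norm (a + b))\<^sup>2"
    by (simp add: power2_norm_eq_inner inner_add_left inner_add_right inner_commute)
  finally have "(1 + \<eta> * lam) * (norm b)\<^sup>2 \<le> (1 - \<eta> * lam) * (norm (x - z))\<^sup>2"
    by (simp add: a_def b_def algebra_simps)
  moreover have pos: "1 + \<eta> * lam > 0" using \<open>\<eta> > 0\<close> \<open>lam > 0\<close> by (simp add: add_pos_pos)
  ultimately have "(norm b)\<^sup>2 \<le> (1 - \<eta> * lam) * (norm (x - z))\<^sup>2 / (1 + \<eta> * lam)"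
    by (simp add: pos_le_divide_eq mult.commute)
  also have "\<dots> = (1 - 2 * lam * \<eta> / (1 + \<eta> * lam)) * (norm (x - z))\<^sup>2"
    using pos by (simp add: field_simps)
  finally have "(norm b)\<^sup>2 \<le> (1 - 2 * lam * \<eta> / (1 + \<eta> * lam)) * (norm (x - z))\<^sup>2" .
  hence "sqrt ((norm b)\<^sup>2) \<le> sqrt ((1 - 2 * lam * \<eta> / (1 + \<eta> * lam)) * (norm (x - z))\<^sup>2)"
    by (rule real_sqrt_le_mono)
  thus ?thesis by (simp add: real_sqrt_mult b_def y_def)
qed

lemma predicted_gradient_step_tracks_minimizer:
  fixes \<phi> :: "'a::euclidean_space \<Rightarrow> real" and g :: "'a \<Rightarrow> 'a"
  assumes "convex X" "closed X" and x: "x \<in> X" and "z \<in> X" "\<forall>w\<in>X. \<phi> z \<le> \<phi> w"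
    and "\<And>u v. u \<in> X \<Longrightarrow> v \<in> X \<Longrightarrow>
                   \<phi> v \<le> \<phi> u + g u \<bullet> (v - u) + L / 2 * (norm (v - u))\<^sup>2"
    and "\<And>u v. u \<in> X \<Longrightarrow> v \<in> X \<Longrightarrow>
                   \<phi> v \<ge> \<phi> u + g u \<bullet> (v - u) + lam / 2 * (norm (v - u))\<^sup>2"
    and "L > 0" "lam > 0" "\<eta> > 0" "\<eta> * L \<le> 1"
  shows "norm (closest_point X (x - \<eta> *\<^sub>R d) - z)
           \<le> sqrt (1 - 2 * lam * \<eta> / (1 + \<eta> * lam)) * norm (x - z) + \<eta> * norm (d - g x)"
proof -
  have "dist (closest_point X (x - \<eta> *\<^sub>R d)) (closest_point X (x - \<eta> *\<^sub>R g x))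
          \<le> dist (x - \<eta> *\<^sub>R d) (x - \<eta> *\<^sub>R g x)"
    using closest_point_lipschitz[OF \<open>convex X\<close> \<open>closed X\<close>] x by blast
  also have "\<dots> = \<eta> * norm (d - g x)"
    using \<open>\<eta> > 0\<close> by (simp add: dist_norm norm_minus_commute flip: scaleR_diff_right)
  finally have "norm (closest_point X (x - \<eta> *\<^sub>R d) - closest_point X (x - \<eta> *\<^sub>R g x))
                  \<le> \<eta> * norm (d - g x)"
    by (simp add: dist_norm)
  thus ?thesis
    using projected_gradient_step_contracts[OF assms]
      norm_triangle_ineq[of "closest_point X (x - \<eta> *\<^sub>R d) - closest_point X (x - \<eta> *\<^sub>R g x)"
                            "closest_point X (x - \<eta> *\<^sub>R g x) - z"]
    by simp
qed

lemma predictive_gradient_step_error: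
  fixes f :: "'a::euclidean_space \<Rightarrow> 'b::real_normed_vector \<Rightarrow> real" and gf :: "'a \<Rightarrow> 'b \<Rightarrow> 'a"
  assumes "convex X" "closed X" and x: "x \<in> X" and z: "z \<in> X" "\<forall>w\<in>X. f z p \<le> f w p"
    and p: "p \<in> \<Theta>" and q: "q \<in> \<Theta>"
    and smooth: "\<And>u v p. u \<in> X \<Longrightarrow> v \<in> X \<Longrightarrow> p \<in> \<Theta> \<Longrightarrow>
                   f v p \<le> f u p + gf u p \<bullet> (v - u) + L / 2 * (norm (v - u))\<^sup>2"
    and strong: "\<And>u v p. u \<in> X \<Longrightarrow> v \<in> X \<Longrightarrow> p \<in> \<Theta> \<Longrightarrow>
                   f v p \<ge> f u p + gf u p \<bullet> (v - u) + lam / 2 * (norm (v - u))\<^sup>2"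
    and grad_Lipschitz: "\<And>u p q. u \<in> X \<Longrightarrow> p \<in> \<Theta> \<Longrightarrow> q \<in> \<Theta> \<Longrightarrow>
                           norm (gf u p - gf u q) \<le> C * norm (p - q)"
    and "L > 0" "lam > 0" "\<eta> > 0" "\<eta> * L \<le> 1"
  shows "norm (closest_point X (x - \<eta> *\<^sub>R gf x q) - z)
           \<le> sqrt (1 - 2 * lam * \<eta> / (1 + \<eta> * lam)) * norm (x - z) + \<eta> * C * norm (p - q)"
proof -
  have "norm (closest_point X (x - \<eta> *\<^sub>R gf x q) - z)
          \<le> sqrt (1 - 2 * lam * \<eta> / (1 + \<eta> * lam)) * norm (x - z) + \<eta> * norm (gf x q - gf x p)"
    by (rule predicted_gradient_step_tracks_minimizer[OF assms(1,2) x z smooth[OF _ _ p] strong[OF _ _ p]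
          assms(11-14)])
  also have "\<eta> * norm (gf x q - gf x p) \<le> \<eta> * C * norm (p - q)"
    using grad_Lipschitz[OF x q p] \<open>\<eta> > 0\<close> by (simp add: norm_minus_commute mult.assoc)
  finally show ?thesis by simp
qed

lemma eq_if_smoothness_lt_strong_convexity:
  fixes \<phi> :: "'a::real_inner \<Rightarrow> real"
  assumes "L < lam"
    and "\<phi> v \<le> \<phi> u + g \<bullet> (v - u) + L / 2 * (norm (v - u))\<^sup>2"
    and "\<phi> v \<ge> \<phi> u + g \<bullet> (v - u) + lam / 2 * (norm (v - u))\<^sup>2"
  shows "u = v"
proof -
  have "lam / 2 * (norm (v - u))\<^sup>2 \<le> L / 2 * (norm (v - u))\<^sup>2" using assms(2,3) by linarith
  thus ?thesis using \<open>L < lam\<close> by (auto simp: mult_le_cancel_right)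
qed

lemma strongly_convex_attains_min_on:
  fixes \<phi> :: "'a::euclidean_space \<Rightarrow> real"
  assumes "closed X" "X \<noteq> {}" "continuous_on UNIV \<phi>" "lam > 0"
    and strong: "\<And>u v. u \<in> X \<Longrightarrow> v \<in> X \<Longrightarrow> \<phi> v \<ge> \<phi> u + g u \<bullet> (v - u) + lam / 2 * (norm (v - u))\<^sup>2"
  shows "\<exists>z\<in>X. \<forall>y\<in>X. \<phi> z \<le> \<phi> y"
proof -
  obtain a where a: "a \<in> X" using \<open>X \<noteq> {}\<close> by blast
  define K where "K = X \<inter> {v. \<phi> v \<le> \<phi> a}"
  have "closed K"
    using closed_Collect_le[OF \<open>continuous_on UNIV \<phi>\<close> continuous_on_const] \<open>closed X\<close>
    by (simp add: K_def closed_Int)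
  have "K \<subseteq> cball a (2 * norm (g a) / lam)"
  proof
    fix v assume v: "v \<in> K"
    define n where "n = norm (v - a)"
    have "- (norm (g a) * n) \<le> g a \<bullet> (v - a)"
      using norm_cauchy_schwarz[of "- g a" "v - a"] by (simp add: n_def)
    moreover have "\<phi> v \<le> \<phi> a" "v \<in> X" using v by (simp_all add: K_def)
    ultimately have "lam / 2 * n * n \<le> norm (g a) * n"
      using strong[OF a, of v] by (simp add: n_def power2_eq_square)
    hence "lam / 2 * n \<le> norm (g a)"
      using mult_right_le_imp_le[of "lam / 2 * n" n "norm (g a)"] by (cases "n = 0") (simp_all add: n_def)
    hence "n \<le> 2 * norm (g a) / lam" using \<open>lam > 0\<close> by (simp add: field_simps)
    thus "v \<in> cball a (2 * norm (g a) / lam)" by (simp add: n_def dist_norm norm_minus_commute)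
  qed
  hence "compact K" using \<open>closed K\<close> bounded_cball bounded_subset compact_eq_bounded_closed by blast
  moreover have "a \<in> K" using a by (simp add: K_def)
  ultimately obtain z where z: "z \<in> K" "\<forall>y\<in>K. \<phi> z \<le> \<phi> y"
    using continuous_attains_inf continuous_on_subset[OF \<open>continuous_on UNIV \<phi>\<close>] by blast
  have "\<phi> z \<le> \<phi> a" using z(2) \<open>a \<in> K\<close> by blast
  hence "\<phi> z \<le> \<phi> y" if "y \<in> X" for y
    using z(2) that unfolding K_def by (cases "\<phi> y \<le> \<phi> a") auto
  thus ?thesis using z(1) by (auto simp: K_def)
qed

lemma argmin_on_minimizes:
  assumes "\<exists>z\<in>X. \<forall>y\<in>X. g z \<le> g y"
  shows "argmin_on X g \<in> X" "\<forall>y\<in>X. g (argmin_on X g) \<le> g y"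
proof -
  have "argmin_on X g \<in> X \<and> (\<forall>y\<in>X. g (argmin_on X g) \<le> g y)"
    unfolding argmin_on_def by (rule someI_ex) (use assms in blast)
  thus "argmin_on X g \<in> X" "\<forall>y\<in>X. g (argmin_on X g) \<le> g y" by simp_all
qed

lemma closest_point_iterates_in:
  fixes x u :: "nat \<Rightarrow> 'a::euclidean_space"
  assumes "closed X" "X \<noteq> {}" "x 1 \<in> X"
    and "\<And>t. 1 \<le> t \<Longrightarrow> t \<le> T - 1 \<Longrightarrow> x (Suc t) = closest_point X (u t)"
    and "1 \<le> t" "t \<le> T"
  shows "x t \<in> X"
proof (cases "t = 1")
  case False
  then obtain k where "t = Suc k" "1 \<le> k" "k \<le> T - 1" using assms(5,6) by (cases t) auto
  thus ?thesis using assms(4) closest_point_in_set[OF assms(1,2)] by simp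
qed (use assms(3) in simp)

lemma dyn_regret_le_Lipschitz_tracking:
  assumes x: "\<And>t. 1 \<le> t \<Longrightarrow> t \<le> T \<Longrightarrow> x t \<in> X"
    and min_ex: "\<And>t. 1 \<le> t \<Longrightarrow> t \<le> T \<Longrightarrow> \<exists>z\<in>X. \<forall>y\<in>X. f z (\<theta> t) \<le> f y (\<theta> t)"
    and Lipschitz: "\<And>t u v. 1 \<le> t \<Longrightarrow> t \<le> T \<Longrightarrow> u \<in> X \<Longrightarrow> v \<in> X \<Longrightarrow>
                      \<bar>f u (\<theta> t) - f v (\<theta> t)\<bar> \<le> G * norm (u - v)"
  shows "dyn_regret X f \<theta> x T \<le> G * (\<Sum>t=1..T. norm (x t - argmin_on X (\<lambda>y. f y (\<theta> t))))"
  unfolding dyn_regret_def sum_distrib_left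
proof (rule sum_mono)
  fix t assume "t \<in> {1..T}"
  hence t: "1 \<le> t" "t \<le> T" by auto
  define z where "z = argmin_on X (\<lambda>y. f y (\<theta> t))"
  have z: "z \<in> X" "\<forall>y\<in>X. f z (\<theta> t) \<le> f y (\<theta> t)"
    using argmin_on_minimizes[OF min_ex[OF t]] by (simp_all add: z_def)
  hence "Inf ((\<lambda>y. f y (\<theta> t)) ` X) = f z (\<theta> t)" by (intro cInf_eq_minimum) auto
  thus "f (x t) (\<theta> t) - Inf ((\<lambda>y. f y (\<theta> t)) ` X) \<le> G * norm (x t - z)"
    using Lipschitz[OF t x[OF t] z(1)] by simp
qed

lemma sum_le_of_contracting_recurrence:
  fixes e p r :: "nat \<Rightarrow> real"
  assumes "0 \<le> c" "c < 1" "\<And>t. 0 \<le> e t"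
    and step: "\<And>t. 1 \<le> t \<Longrightarrow> t < T \<Longrightarrow> e (Suc t) \<le> c * e t + c * p t + r (Suc t)"
  shows "(\<Sum>t=1..T. e t) \<le> (e 1 + c * (\<Sum>t\<in>{1..<T}. p t) + (\<Sum>t=2..T. r t)) / (1 - c)"
proof (cases "T = 0")
  case False
  define S where "S = (\<Sum>t=1..T. e t)"
  have shift: "(\<Sum>t=2..T. h t) = (\<Sum>t\<in>{1..<T}. h (Suc t))" for h :: "nat \<Rightarrow> real"
    unfolding sum.shift_bounds_Suc_ivl[symmetric] by (simp add: atLeastLessThanSuc_atLeastAtMost numeral_2_eq_2)
  have "S = e 1 + (\<Sum>t=2..T. e t)"
    using False by (simp add: S_def sum.atLeast_Suc_atMost numeral_2_eq_2)
  also have "\<dots> \<le> e 1 + (\<Sum>t\<in>{1..<T}. c * e t + c * p t + r (Suc t))"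
    unfolding shift using step by (intro add_left_mono sum_mono) auto
  also have "\<dots> = e 1 + c * (\<Sum>t\<in>{1..<T}. e t) + c * (\<Sum>t\<in>{1..<T}. p t) + (\<Sum>t=2..T. r t)"
    by (simp add: sum.distrib sum_distrib_left shift)
  also have "c * (\<Sum>t\<in>{1..<T}. e t) \<le> c * S"
    unfolding S_def using assms(1,3) by (intro mult_left_mono sum_mono2) auto
  finally have "(1 - c) * S \<le> e 1 + c * (\<Sum>t\<in>{1..<T}. p t) + (\<Sum>t=2..T. r t)"
    by (simp add: left_diff_distrib)
  thus ?thesis using \<open>c < 1\<close> by (simp add: S_def pos_le_divide_eq mult.commute)
qed (use assms in simp)

lemma tracking_sum_le_of_contracting_steps:
  fixes x z :: "nat \<Rightarrow> 'a::real_normed_vector" and r :: "nat \<Rightarrow> real"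
  assumes "0 \<le> c" "c < 1"
    and step: "\<And>t. 1 \<le> t \<Longrightarrow> t < T \<Longrightarrow>
                 norm (x (Suc t) - z (Suc t)) \<le> c * norm (x t - z (Suc t)) + r (Suc t)"
  shows "(\<Sum>t=1..T. norm (x t - z t))
           \<le> (norm (x 1 - z 1) + c * (\<Sum>t\<in>{1..<T}. norm (z t - z (Suc t))) + (\<Sum>t=2..T. r t)) / (1 - c)"
proof (rule sum_le_of_contracting_recurrence[OF assms(1,2)])
  fix t assume t: "1 \<le> t" "t < T"
  have "c * norm (x t - z (Suc t)) \<le> c * (norm (x t - z t) + norm (z t - z (Suc t)))"
    using norm_triangle_ineq[of "x t - z t" "z t - z (Suc t)"] \<open>0 \<le> c\<close> by (intro mult_left_mono) simp_all
  thus "norm (x (Suc t) - z (Suc t)) \<le> c * norm (x t - z t) + c * norm (z t - z (Suc t)) + r (Suc t)"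
    using step[OF t] by (simp add: distrib_left)
qed simp

theorem theorem1:
  fixes X :: "(real ^ 'n) set" and \<Theta> :: "(real ^ 'm) set"
    and f :: "real ^ 'n \<Rightarrow> real ^ 'm \<Rightarrow> real"
    and gf :: "real ^ 'n \<Rightarrow> real ^ 'm \<Rightarrow> real ^ 'n"
    and G L lam C\<theta> \<eta> :: real
    and T :: nat
    and \<theta> \<theta>h :: "nat \<Rightarrow> real ^ 'm"
    and x :: "nat \<Rightarrow> real ^ 'n"
  assumes X_ne: "X \<noteq> {}" and X_closed: "closed X" and X_convex: "convex X"
    and grad: "\<And>z p. ((\<lambda>y. f y p) has_derivative (\<lambda>h. gf z p \<bullet> h)) (at z)"
    and cvx: "\<And>p. convex_on UNIV (\<lambda>y. f y p)"
    and A1: "G > 0" "\<And>u v p. u \<in> X \<Longrightarrow> v \<in> X \<Longrightarrow> p \<in> \<Theta> \<Longrightarrow> \<bar>f u p - f v p\<bar> \<le> G * norm (u - v)"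
    and A2: "L > 0" "\<And>u v p. u \<in> X \<Longrightarrow> v \<in> X \<Longrightarrow> p \<in> \<Theta> \<Longrightarrow>
               f v p \<le> f u p + gf u p \<bullet> (v - u) + L / 2 * (norm (v - u))\<^sup>2"
    and A3: "lam > 0" "\<And>u v p. u \<in> X \<Longrightarrow> v \<in> X \<Longrightarrow> p \<in> \<Theta> \<Longrightarrow>
               f v p \<ge> f u p + gf u p \<bullet> (v - u) + lam / 2 * (norm (v - u))\<^sup>2"
    and A4: "C\<theta> > 0" "\<And>u p q. u \<in> X \<Longrightarrow> p \<in> \<Theta> \<Longrightarrow> q \<in> \<Theta> \<Longrightarrow>
               norm (gf u p - gf u q) \<le> C\<theta> * norm (p - q)"
    and theta_in: "\<And>t. 1 \<le> t \<Longrightarrow> t \<le> T \<Longrightarrow> \<theta> t \<in> \<Theta>"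
    and thetah_in: "\<And>t. 2 \<le> t \<Longrightarrow> t \<le> T \<Longrightarrow> \<theta>h t \<in> \<Theta>"
    and eta_pos: "\<eta> > 0" and eta_le: "\<eta> \<le> 1 / L"
    and x1: "x 1 \<in> X"
    and x_step: "\<And>t. 1 \<le> t \<Longrightarrow> t \<le> T - 1 \<Longrightarrow>
                   x (Suc t) = closest_point X (x t - \<eta> *\<^sub>R gf (x t) (\<theta>h (Suc t)))"
  shows "sqrt (1 - 2 * lam * \<eta> / (1 + \<eta> * lam)) < 1 \<and>
         dyn_regret X f \<theta> x T
           \<le> G * norm (x 1 - argmin_on X (\<lambda>y. f y (\<theta> 1)))
                 / (1 - sqrt (1 - 2 * lam * \<eta> / (1 + \<eta> * lam)))
             + G * sqrt (1 - 2 * lam * \<eta> / (1 + \<eta> * lam))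
                 / (1 - sqrt (1 - 2 * lam * \<eta> / (1 + \<eta> * lam))) * path_length X f \<theta> T
             + G * \<eta> * C\<theta> / (1 - sqrt (1 - 2 * lam * \<eta> / (1 + \<eta> * lam)))
                 * pred_regularity \<theta> \<theta>h T"
proof -
  define c where "c = sqrt (1 - 2 * lam * \<eta> / (1 + \<eta> * lam))"
  define xs where "xs t = argmin_on X (\<lambda>y. f y (\<theta> t))" for t
  define e where "e t = norm (x t - xs t)" for t
  have "2 * lam * \<eta> / (1 + \<eta> * lam) > 0" using A3(1) eta_pos by (simp add: add_pos_pos)
  hence c_lt_1: "c < 1" by (simp add: c_def)
  have etaL: "\<eta> * L \<le> 1" using eta_le A2(1) by (simp add: field_simps)
  have x_in: "x t \<in> X" if "1 \<le> t" "t \<le> T" for t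
    using closest_point_iterates_in[OF X_closed X_ne x1 x_step that] .
  have min_ex: "\<exists>z\<in>X. \<forall>y\<in>X. f z (\<theta> t) \<le> f y (\<theta> t)" if "1 \<le> t" "t \<le> T" for t
  proof -
    have "continuous_on UNIV (\<lambda>y. f y (\<theta> t))"
      by (intro continuous_at_imp_continuous_on ballI has_derivative_continuous[OF grad])
    thus ?thesis
      using strongly_convex_attains_min_on[OF X_closed X_ne _ A3(1) A3(2)] theta_in[OF that] by blast
  qed
  have xs: "xs t \<in> X" "\<forall>y\<in>X. f (xs t) (\<theta> t) \<le> f y (\<theta> t)" if "1 \<le> t" "t \<le> T" for t
    using argmin_on_minimizes[OF min_ex[OF that]] by (simp_all add: xs_def)
  have regret: "dyn_regret X f \<theta> x T \<le> G * (\<Sum>t=1..T. e t)"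
    unfolding e_def xs_def
    by (rule dyn_regret_le_Lipschitz_tracking[where f=f and \<theta>=\<theta>])
      (simp_all add: x_in min_ex A1(2) theta_in)
  have tracking: "(\<Sum>t=1..T. e t)
                    \<le> (e 1 + c * path_length X f \<theta> T + \<eta> * C\<theta> * pred_regularity \<theta> \<theta>h T) / (1 - c)"
  proof (cases "\<eta> * lam \<le> 1")
    case True
    have "1 + \<eta> * lam > 0" using A3(1) eta_pos by (simp add: add_pos_pos)
    hence "2 * lam * \<eta> / (1 + \<eta> * lam) \<le> 1" using True by (simp add: pos_divide_le_eq)
    hence "0 \<le> c" by (simp add: c_def)
    have "norm (x (Suc t) - xs (Suc t))
            \<le> c * norm (x t - xs (Suc t)) + \<eta> * C\<theta> * norm (\<theta> (Suc t) - \<theta>h (Suc t))"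
      if "1 \<le> t" "t < T" for t
      using predictive_gradient_step_error[OF X_convex X_closed x_in xs theta_in thetah_in A2(2) A3(2) A4(2)
          A2(1) A3(1) eta_pos etaL] x_step that
      by (simp add: c_def)
    from tracking_sum_le_of_contracting_steps[where r="\<lambda>t. \<eta> * C\<theta> * norm (\<theta> t - \<theta>h t)",
        OF \<open>0 \<le> c\<close> c_lt_1 this]
    show ?thesis by (simp add: e_def path_length_def pred_regularity_def xs_def sum_distrib_left)
  next
    case False
    \<comment> \<open>then \<open>L < lam\<close>, which forces \<open>X\<close> to be a single point; \<open>c\<close> is the negative junk value
        of \<open>sqrt\<close> here, but every tracking error and the path length vanish\<close>
    hence "\<eta> * L < \<eta> * lam" using etaL by linarith
    hence "L < lam" using eta_pos by simp
    have single: "u = v" if "u \<in> X" "v \<in> X" "1 \<le> T" for u v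
      using eq_if_smoothness_lt_strong_convexity[OF \<open>L < lam\<close> A2(2)[of u v "\<theta> 1"] A3(2)[of u v "\<theta> 1"]]
        that theta_in by simp
    have "e t = 0" if "1 \<le> t" "t \<le> T" for t
      using single[OF x_in[OF that] xs(1)[OF that]] that by (simp add: e_def)
    moreover have "path_length X f \<theta> T = 0"
      unfolding path_length_def xs_def[symmetric] using single xs(1) by (intro sum.neutral) auto
    moreover have "pred_regularity \<theta> \<theta>h T \<ge> 0" by (simp add: pred_regularity_def sum_nonneg)
    ultimately show ?thesis using c_lt_1 A4(1) eta_pos by (simp add: e_def)
  qed
  have "dyn_regret X f \<theta> x T
          \<le> G * ((e 1 + c * path_length X f \<theta> T + \<eta> * C\<theta> * pred_regularity \<theta> \<theta>h T) / (1 - c))"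
    using regret mult_left_mono[OF tracking, of G] A1(1) by linarith
  also have "\<dots> = G * e 1 / (1 - c) + G * c / (1 - c) * path_length X f \<theta> T
                    + G * \<eta> * C\<theta> / (1 - c) * pred_regularity \<theta> \<theta>h T"
    by (simp add: add_divide_distrib distrib_left)
  finally show ?thesis using c_lt_1 by (simp add: e_def xs_def c_def[symmetric])
qed

end
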